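(* Let $(\mathcal S,\mathcal A,P,R,d_0)$ be a finite episodic MDP with horizon $T$ and $\pi_\theta$ a parameterized policy as described in the context. Let $\theta_0\in\mathbb R^n$ and let $(\theta_i)$ be generated by $$\theta_{i+1}=\theta_i+\alpha_i\,\hat\nabla(\theta_i,\gamma_i),$$ where for all $i$ the step size $\alpha_i>0$, the discount factor $\gamma_i\in[0,1]$, and $$\sum_{i=0}^\infty\alpha_i=\infty,\qquad\sum_{i=0}^\infty\alpha_i^2<\infty,\qquad \alpha_i\ge c(1-\gamma_i)$$ for some constant $c>0$. Then $J(\theta_i)$ converges to a finite value and $\lim_{i\to\infty}\nabla J(\theta_i)=0$. Furthermore, every limit point of $(\theta_i)$ is a stationary point of $J$.
   Context: Setting: $\mathcal S$ is a finite set of states, $\mathcal A$ a finite set of actions, $P(s'\mid s,a)$ a transition function, $R(\cdot\mid s,a,s')$ a reward distribution supported in $[-R_{\max},R_{\max}]$, and $d_0$ an initial state distribution. There is a terminal absorbing state in which the agent stays and receives reward $0$. An episode: $S_0\sim d_0$; at each time $t$, $A_t\sim\pi_\theta(\cdot\mid S_t)$, $S_{t+1}\sim P(\cdot\mid S_t,A_t)$, $R_t\sim R(\cdot\mid S_t,A_t,S_{t+1})$; the horizon $T$ is fixed and $S_T$ is terminal. The policy $\pi_\theta(a\mid s)$ is positive and differentiable in $\theta\in\mathbb R^n$, there is a constant $L_\pi$ with $\big\|\frac{\partial}{\partial\theta}\ln\pi_\theta(a\mid s)\big\|\le L_\pi$ for all $\theta,s,a$, and the parameterization is such that $J$ is continuously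 differentiable on $\mathbb R^n$ with Lipschitz continuous gradient. Expectations are under $\pi=\pi_\theta$. Objective: $J(\theta)=\mathbb E\big[\sum_{t=0}^{T-1}R_t\big]$. For $\gamma\in[0,1]$ (with $0^0=1$), the discounted action-value function is $Q^{\pi_\theta}_\gamma(s,a)=\mathbb E\big[\sum_{i=t}^{T}\gamma^{i-t}R_i\,\big|\,S_t=s,A_t=a\big]$ (treated as a function of $(s,a)$ only, i.e. not depending on $t$, e.g. because time is encoded in the state). The discounted approximation of the policy gradient is $$\hat\nabla(\theta,\gamma)=\mathbb E\Big[\sum_{t=0}^{T-1}Q^{\pi_\theta}_\gamma(S_t,A_t)\,\frac{\partial}{\partial\theta}\ln\pi_\theta(A_t\mid S_t)\Big].$$ *)

theory Defs
  imports "HOL-Probability.Probability"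
begin

text \<open>States: a finite type 's, actions: a finite type 'a.
  d0 s = initial probability, P s a s' = transition probability,
  R s a s' = reward distribution (a probability measure on the reals),
  pol s a = pi(a|s) for a fixed parameter.\<close>

fun state_dist :: "('s::finite \<Rightarrow> real) \<Rightarrow> ('s \<Rightarrow> 'a::finite \<Rightarrow> 's \<Rightarrow> real)
    \<Rightarrow> ('s \<Rightarrow> 'a \<Rightarrow> real) \<Rightarrow> nat \<Rightarrow> 's \<Rightarrow> real" where
  "state_dist d0 P pol 0 s = d0 s"
| "state_dist d0 P pol (Suc t) s' =
     (\<Sum>s\<in>UNIV. \<Sum>a\<in>UNIV. state_dist d0 P pol t s * pol s a * P s a s')"

definition mean_reward :: "('s \<Rightarrow> 'a \<Rightarrow> 's \<Rightarrow> real measure) \<Rightarrow> 's \<Rightarrow> 'a \<Rightarrow> 's \<Rightarrow> real" where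
  "mean_reward R s a s' = (\<integral>x. x \<partial>(R s a s'))"

definition J_obj :: "('s::finite \<Rightarrow> real) \<Rightarrow> ('s \<Rightarrow> 'a::finite \<Rightarrow> 's \<Rightarrow> real)
    \<Rightarrow> ('s \<Rightarrow> 'a \<Rightarrow> 's \<Rightarrow> real measure) \<Rightarrow> ('s \<Rightarrow> 'a \<Rightarrow> real) \<Rightarrow> nat \<Rightarrow> real" where
  "J_obj d0 P R pol T =
     (\<Sum>t<T. \<Sum>s\<in>UNIV. \<Sum>a\<in>UNIV. \<Sum>s'\<in>UNIV.
        state_dist d0 P pol t s * pol s a * P s a s' * mean_reward R s a s')"

fun Q_steps :: "('s::finite \<Rightarrow> 'a::finite \<Rightarrow> 's \<Rightarrow> real) \<Rightarrow> ('s \<Rightarrow> 'a \<Rightarrow> 's \<Rightarrow> real measure)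
    \<Rightarrow> ('s \<Rightarrow> 'a \<Rightarrow> real) \<Rightarrow> real \<Rightarrow> nat \<Rightarrow> 's \<Rightarrow> 'a \<Rightarrow> real" where
  "Q_steps P R pol \<gamma> 0 s a = 0"
| "Q_steps P R pol \<gamma> (Suc k) s a =
     (\<Sum>s'\<in>UNIV. P s a s' * (mean_reward R s a s'
        + \<gamma> * (\<Sum>a'\<in>UNIV. pol s' a' * Q_steps P R pol \<gamma> k s' a')))"

text \<open>Discounted action value Q_gamma(s,a) = E[sum_{i=t}^T gamma^(i-t) R_i | S_t=s, A_t=a].
  Since the episode is in the absorbing zero-reward terminal state from time T on,
  T further steps always cover the remaining episode, for every t.\<close>
definition Q_gamma :: "('s::finite \<Rightarrow> 'a::finite \<Rightarrow> 's \<Rightarrow> real) \<Rightarrow> ('s \<Rightarrow> 'a \<Rightarrow> 's \<Rightarrow> real measure)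
    \<Rightarrow> ('s \<Rightarrow> 'a \<Rightarrow> real) \<Rightarrow> nat \<Rightarrow> real \<Rightarrow> 's \<Rightarrow> 'a \<Rightarrow> real" where
  "Q_gamma P R pol T \<gamma> s a = Q_steps P R pol \<gamma> T s a"

text \<open>Discounted approximation of the policy gradient; glog s a is the gradient
  of ln pi_theta(a|s) at the current parameter.\<close>
definition disc_grad :: "('s::finite \<Rightarrow> real) \<Rightarrow> ('s \<Rightarrow> 'a::finite \<Rightarrow> 's \<Rightarrow> real)
    \<Rightarrow> ('s \<Rightarrow> 'a \<Rightarrow> 's \<Rightarrow> real measure) \<Rightarrow> ('s \<Rightarrow> 'a \<Rightarrow> real)
    \<Rightarrow> ('s \<Rightarrow> 'a \<Rightarrow> 'v::real_vector) \<Rightarrow> nat \<Rightarrow> real \<Rightarrow> 'v" where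
  "disc_grad d0 P R pol glog T \<gamma> =
     (\<Sum>t<T. \<Sum>s\<in>UNIV. \<Sum>a\<in>UNIV.
        (state_dist d0 P pol t s * pol s a * Q_gamma P R pol T \<gamma> s a) *\<^sub>R glog s a)"

end

theory Submission
  imports Defs
begin

text \<open>Every trajectory is absorbed by time T, so by the policy gradient theorem \<open>\<nabla>J\<close> is the
  undiscounted approximation \<open>\<nabla>(\<theta>, 1)\<close>. Discounting moves every action value by at most
  \<open>(1 - \<gamma>) T\<^sup>2 max |r|\<close>, hence the update direction is \<open>\<nabla>J(\<theta>\<^sub>i)\<close> up to a bias
  \<open>O(1 - \<gamma>\<^sub>i) = O(\<alpha>\<^sub>i)\<close>. For such a biased ascent along a Lipschitz gradient with bounded
  steps, the descent lemma gives \<open>J(\<theta>\<^sub>i\<^sub>+\<^sub>1) \<ge> J(\<theta>\<^sub>i) + \<alpha>\<^sub>i |\<nabla>J(\<theta>\<^sub>i)|\<^sup>2 - C \<alpha>\<^sub>i\<^sup>2\<close>. As J is bounded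
  and \<open>\<Sum> \<alpha>\<^sub>i\<^sup>2 < \<infinity>\<close>, the values \<open>J(\<theta>\<^sub>i)\<close> converge and \<open>\<Sum> \<alpha>\<^sub>i |\<nabla>J(\<theta>\<^sub>i)|\<^sup>2 < \<infinity>\<close>; since
  \<open>\<Sum> \<alpha>\<^sub>i = \<infinity>\<close> and \<open>|\<nabla>J(\<theta>\<^sub>i)|\<close> can grow by only \<open>O(\<alpha>\<^sub>i)\<close> per step, \<open>\<nabla>J(\<theta>\<^sub>i) \<rightarrow> 0\<close>.\<close>

section \<open>Gradient ascent with vanishing bias\<close>

lemma GDERIV_lipschitz_lower_bound:
  fixes f :: "'v::real_inner \<Rightarrow> real"
  assumes grad: "\<forall>z. GDERIV f z :> g z" and lip: "L-lipschitz_on UNIV g"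
  shows "f x + g x \<bullet> (y - x) - L / 2 * (norm (y - x))\<^sup>2 \<le> f y"
proof -
  define v where "v = y - x"
  define \<phi> where "\<phi> t = f (x + t *\<^sub>R v) - t * (g x \<bullet> v) + L / 2 * t\<^sup>2 * (norm v)\<^sup>2" for t
  have \<phi>_deriv: "DERIV \<phi> t :> g (x + t *\<^sub>R v) \<bullet> v - g x \<bullet> v + L * t * (norm v)\<^sup>2" for t
  proof -
    have "((\<lambda>t. x + t *\<^sub>R v) has_derivative (\<lambda>t. t *\<^sub>R v)) (at t)"
      by (auto intro!: derivative_eq_intros)
    then have "((\<lambda>t. f (x + t *\<^sub>R v)) has_derivative (\<lambda>h. (h *\<^sub>R v) \<bullet> g (x + t *\<^sub>R v))) (at t)"
      using has_derivative_compose[of _ _ t UNIV f] grad unfolding gderiv_def by blast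
    moreover have "(\<lambda>h. (h *\<^sub>R v) \<bullet> g (x + t *\<^sub>R v)) = (*) (g (x + t *\<^sub>R v) \<bullet> v)"
      by (auto simp: inner_commute)
    ultimately have "DERIV (\<lambda>t. f (x + t *\<^sub>R v)) t :> g (x + t *\<^sub>R v) \<bullet> v"
      unfolding has_field_derivative_def by simp
    then show ?thesis
      unfolding \<phi>_def by (auto intro!: derivative_eq_intros)
  qed
  obtain z where z: "0 < z" "z < 1"
    and mvt: "\<phi> 1 - \<phi> 0 = g (x + z *\<^sub>R v) \<bullet> v - g x \<bullet> v + L * z * (norm v)\<^sup>2"
    using MVT2[of 0 1 \<phi>, OF _ \<phi>_deriv] by auto
  have "\<bar>(g (x + z *\<^sub>R v) - g x) \<bullet> v\<bar> \<le> norm (g (x + z *\<^sub>R v) - g x) * norm v"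
    by (rule Cauchy_Schwarz_ineq2)
  also have "\<dots> \<le> L * (z * norm v) * norm v"
    using lipschitz_onD[OF lip, of "x + z *\<^sub>R v" x] z by (intro mult_right_mono) (auto simp: dist_norm)
  finally have "0 \<le> g (x + z *\<^sub>R v) \<bullet> v - g x \<bullet> v + L * z * (norm v)\<^sup>2"
    by (simp add: power2_eq_square algebra_simps)
  then have "\<phi> 0 \<le> \<phi> 1"
    using mvt by simp
  then show ?thesis
    unfolding \<phi>_def v_def by simp
qed

lemma ascent_step_lower_bound:
  fixes f :: "'v::real_inner \<Rightarrow> real"
  assumes grad: "\<forall>z. GDERIV f z :> g z" and lip: "L-lipschitz_on UNIV g"
    and g_bound: "norm (g x) \<le> G" and d_bound: "norm d \<le> D"
    and bias: "norm (g x - d) \<le> B * \<alpha>" and \<alpha>_nonneg: "0 \<le> \<alpha>"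
  shows "f x + \<alpha> * (norm (g x))\<^sup>2 - (G * B + L / 2 * D\<^sup>2) * \<alpha>\<^sup>2 \<le> f (x + \<alpha> *\<^sub>R d)"
proof -
  have L_nonneg: "0 \<le> L"
    using lip by (simp add: lipschitz_on_def)
  have G_nonneg: "0 \<le> G"
    using norm_ge_zero g_bound by (rule order_trans)
  have "g x \<bullet> (g x - d) \<le> norm (g x) * norm (g x - d)"
    by (rule norm_cauchy_schwarz)
  also have "\<dots> \<le> G * (B * \<alpha>)"
    using g_bound bias G_nonneg by (intro mult_mono) auto
  finally have "(norm (g x))\<^sup>2 - G * B * \<alpha> \<le> g x \<bullet> d"
    by (simp add: inner_diff_right power2_norm_eq_inner)
  then have linear: "\<alpha> * (norm (g x))\<^sup>2 - G * B * \<alpha>\<^sup>2 \<le> g x \<bullet> (\<alpha> *\<^sub>R d)"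
    using mult_left_mono[OF _ \<alpha>_nonneg] by (fastforce simp: power2_eq_square algebra_simps)
  have "(norm (\<alpha> *\<^sub>R d))\<^sup>2 \<le> \<alpha>\<^sup>2 * D\<^sup>2"
    using d_bound \<alpha>_nonneg by (simp add: power_mult_distrib mult_left_mono power_mono)
  then have quadratic: "L / 2 * (norm (\<alpha> *\<^sub>R d))\<^sup>2 \<le> L / 2 * (\<alpha>\<^sup>2 * D\<^sup>2)"
    using L_nonneg by (intro mult_left_mono) auto
  show ?thesis
    using GDERIV_lipschitz_lower_bound[OF grad lip, of x "x + \<alpha> *\<^sub>R d"] linear quadratic
    by (simp add: algebra_simps)
qed

lemma convergent_if_increments_bounded_below:
  fixes f e \<alpha> :: "nat \<Rightarrow> real"
  assumes bounded: "\<forall>i. f i \<le> F" and C_nonneg: "0 \<le> C"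
    and increment: "\<forall>i. e i - C * (\<alpha> i)\<^sup>2 \<le> f (Suc i) - f i" and e_nonneg: "\<forall>i. 0 \<le> e i"
    and \<alpha>_sq_sum: "summable (\<lambda>i. (\<alpha> i)\<^sup>2)"
  shows "convergent f \<and> summable e"
proof -
  define u where "u n = f n + C * (\<Sum>i<n. (\<alpha> i)\<^sup>2)" for n
  have "u n \<le> u (Suc n)" for n
    using increment[rule_format, of n] e_nonneg[rule_format, of n] by (simp add: u_def algebra_simps)
  then have "incseq u"
    by (rule incseq_SucI)
  moreover have "u n \<le> F + C * (\<Sum>i. (\<alpha> i)\<^sup>2)" for n
  proof -
    have "(\<Sum>i<n. (\<alpha> i)\<^sup>2) \<le> (\<Sum>i. (\<alpha> i)\<^sup>2)"
      by (rule sum_le_suminf[OF \<alpha>_sq_sum]) auto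
    then show ?thesis
      using bounded mult_left_mono[OF _ C_nonneg] by (simp add: u_def add_mono)
  qed
  ultimately obtain l where "u \<longlonglongrightarrow> l"
    using incseq_convergent by blast
  then have "(\<lambda>n. u n - C * (\<Sum>i<n. (\<alpha> i)\<^sup>2)) \<longlonglongrightarrow> l - C * (\<Sum>i. (\<alpha> i)\<^sup>2)"
    using summable_LIMSEQ[OF \<alpha>_sq_sum] by (intro tendsto_intros)
  then have f_lim: "f \<longlonglongrightarrow> l - C * (\<Sum>i. (\<alpha> i)\<^sup>2)"
    by (simp add: u_def)
  have "summable (\<lambda>i. (f (Suc i) - f i) + C * (\<alpha> i)\<^sup>2)"
    by (intro summable_add summable_mult telescope_summable[OF f_lim] \<alpha>_sq_sum)
  then have "summable e"
  proof (rule summable_comparison_test')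
    show "norm (e n) \<le> f (Suc n) - f n + C * (\<alpha> n)\<^sup>2" for n
      using increment[rule_format, of n] e_nonneg[rule_format, of n] by simp
  qed
  then show ?thesis
    using f_lim by (auto simp: convergent_def)
qed

lemma frequently_below_if_weighted_squares_summable:
  fixes \<alpha> h :: "nat \<Rightarrow> real"
  assumes \<alpha>_pos: "\<forall>i. 0 < \<alpha> i" and \<alpha>_sum: "\<not> summable \<alpha>"
    and weighted: "summable (\<lambda>i. \<alpha> i * (h i)\<^sup>2)" and \<delta>_pos: "0 < \<delta>"
  shows "\<exists>i\<ge>N. h i < \<delta>"
proof (rule ccontr)
  assume "\<not> (\<exists>i\<ge>N. h i < \<delta>)"
  then have above: "\<delta> \<le> h j" if "N \<le> j" for j
    using that by (simp add: not_less)
  have "norm (\<alpha> j) \<le> \<alpha> j * (h j)\<^sup>2 / \<delta>\<^sup>2" if "N \<le> j" for j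
  proof -
    have "\<alpha> j * \<delta>\<^sup>2 \<le> \<alpha> j * (h j)\<^sup>2"
      using above[OF that] \<alpha>_pos \<delta>_pos by (intro mult_left_mono power_mono) (auto simp: less_imp_le)
    then show ?thesis
      using \<alpha>_pos[rule_format, of j] \<delta>_pos by (simp add: field_simps)
  qed
  then have "summable \<alpha>"
    by (intro summable_comparison_test'[OF summable_divide[OF weighted]]) auto
  then show False
    using \<alpha>_sum by simp
qed

lemma last_index_below:
  fixes h :: "nat \<Rightarrow> 'a::linorder"
  assumes "i < k" "h i < \<delta>"
  obtains p where "i \<le> p" "p < k" "h p < \<delta>" "\<And>j. p < j \<Longrightarrow> j < k \<Longrightarrow> \<delta> \<le> h j"
proof -
  define S where "S = {j. i \<le> j \<and> j < k \<and> h j < \<delta>}"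
  have "finite S" "i \<in> S"
    using assms by (auto simp: S_def)
  then have max_in: "Max S \<in> S" and max_ge: "\<And>j. j \<in> S \<Longrightarrow> j \<le> Max S"
    by (auto intro: Max_in)
  show ?thesis
  proof (rule that[of "Max S"])
    show "i \<le> Max S" "Max S < k" "h (Max S) < \<delta>"
      using max_in by (auto simp: S_def)
    show "\<delta> \<le> h j" if "Max S < j" "j < k" for j
    proof (rule ccontr)
      assume "\<not> \<delta> \<le> h j"
      then have "j \<in> S"
        using that max_in by (auto simp: S_def)
      then show False
        using max_ge that(1) by fastforce
    qed
  qed
qed

lemma upcrossing_weighted_squares_gt:
  fixes \<alpha> h :: "nat \<Rightarrow> real"
  assumes "p < k" "h p + \<delta> < h k" "K * \<alpha> p < \<delta> / 2"
    and increment: "\<forall>i. h (Suc i) - h i \<le> K * \<alpha> i" and K_pos: "0 < K"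
    and above: "\<And>j. p < j \<Longrightarrow> j < k \<Longrightarrow> \<delta> \<le> h j"
    and \<alpha>_nonneg: "\<forall>i. 0 \<le> \<alpha> i" and \<delta>_pos: "0 < \<delta>"
  shows "\<delta>\<^sup>2 * (\<delta> / (2 * K)) < (\<Sum>j=Suc p..<k. \<alpha> j * (h j)\<^sup>2)"
proof -
  have "h k - h p = (\<Sum>j=p..<k. h (Suc j) - h j)"
    using \<open>p < k\<close> by (simp add: sum_Suc_diff')
  also have "\<dots> \<le> (\<Sum>j=p..<k. K * \<alpha> j)"
    using increment by (intro sum_mono) auto
  also have "\<dots> = K * \<alpha> p + K * (\<Sum>j=Suc p..<k. \<alpha> j)"
    using \<open>p < k\<close> by (simp add: sum.atLeast_Suc_lessThan sum_distrib_left)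
  finally have "\<delta> / (2 * K) < (\<Sum>j=Suc p..<k. \<alpha> j)"
    using assms(2,3) K_pos by (simp add: field_simps)
  then have "\<delta>\<^sup>2 * (\<delta> / (2 * K)) < \<delta>\<^sup>2 * (\<Sum>j=Suc p..<k. \<alpha> j)"
    using \<delta>_pos by (intro mult_strict_left_mono) auto
  also have "\<dots> = (\<Sum>j=Suc p..<k. \<alpha> j * \<delta>\<^sup>2)"
    by (simp add: sum_distrib_left mult.commute)
  also have "\<dots> \<le> (\<Sum>j=Suc p..<k. \<alpha> j * (h j)\<^sup>2)"
    using above \<alpha>_nonneg \<delta>_pos by (intro sum_mono mult_left_mono power_mono) auto
  finally show ?thesis .
qed

text \<open>If h were at least \<open>2\<delta>\<close> infinitely often, it would climb from below \<open>\<delta>\<close> to \<open>2\<delta>\<close> at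
  arbitrarily late times; as \<open>\<alpha> \<longlonglongrightarrow> 0\<close>, each climb keeps h above \<open>\<delta>\<close> over a stretch of total
  weight at least \<open>\<delta>/(2K)\<close>, contradicting the Cauchy criterion for the \<open>\<alpha> i * (h i)\<^sup>2\<close>.\<close>
lemma tendsto_zero_if_weighted_squares_summable:
  fixes \<alpha> h :: "nat \<Rightarrow> real"
  assumes \<alpha>_pos: "\<forall>i. 0 < \<alpha> i" and \<alpha>_sum: "\<not> summable \<alpha>" and \<alpha>_lim: "\<alpha> \<longlonglongrightarrow> 0"
    and weighted: "summable (\<lambda>i. \<alpha> i * (h i)\<^sup>2)" and h_nonneg: "\<forall>i. 0 \<le> h i"
    and increment: "\<forall>i. h (Suc i) - h i \<le> K * \<alpha> i" and K_pos: "0 < K"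
  shows "h \<longlonglongrightarrow> 0"
proof (rule LIMSEQ_I)
  fix \<epsilon> :: real
  assume \<epsilon>_pos: "0 < \<epsilon>"
  show "\<exists>N. \<forall>n\<ge>N. norm (h n - 0) < \<epsilon>"
  proof (rule ccontr)
    assume "\<not> (\<exists>N. \<forall>n\<ge>N. norm (h n - 0) < \<epsilon>)"
    then have large: "\<exists>k\<ge>N. \<epsilon> \<le> h k" for N
      using h_nonneg by (auto simp: not_less)
    define \<delta> where "\<delta> = \<epsilon> / 2"
    have \<delta>_pos: "0 < \<delta>"
      using \<epsilon>_pos by (simp add: \<delta>_def)
    obtain N1 where N1: "\<And>m n. N1 \<le> m \<Longrightarrow> norm (\<Sum>j=m..<n. \<alpha> j * (h j)\<^sup>2) < \<delta>\<^sup>2 * (\<delta> / (2 * K))"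
      using weighted \<delta>_pos K_pos unfolding summable_Cauchy
      by (metis divide_pos_pos mult_pos_pos zero_less_numeral zero_less_power)
    obtain N2 where N2: "\<And>n. N2 \<le> n \<Longrightarrow> \<alpha> n < \<delta> / (2 * K)"
      using LIMSEQ_D[OF \<alpha>_lim, of "\<delta> / (2 * K)"] \<delta>_pos K_pos \<alpha>_pos by force
    obtain i where i: "max N1 N2 \<le> i" "h i < \<delta>"
      using frequently_below_if_weighted_squares_summable[OF \<alpha>_pos \<alpha>_sum weighted \<delta>_pos] by blast
    obtain k where k: "i \<le> k" "\<epsilon> \<le> h k"
      using large by blast
    have "i < k"
      using i k \<delta>_pos by (cases "i = k") (auto simp: \<delta>_def)
    then obtain p where p: "i \<le> p" "p < k" "h p < \<delta>" and above: "\<And>j. p < j \<Longrightarrow> j < k \<Longrightarrow> \<delta> \<le> h j"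
      using i last_index_below by metis
    have "K * \<alpha> p < \<delta> / 2"
      using N2[of p] p i K_pos by (simp add: field_simps)
    moreover have "h p + \<delta> < h k"
      using k p by (simp add: \<delta>_def)
    ultimately have "\<delta>\<^sup>2 * (\<delta> / (2 * K)) < (\<Sum>j=Suc p..<k. \<alpha> j * (h j)\<^sup>2)"
      using \<alpha>_pos \<delta>_pos K_pos increment above \<open>p < k\<close>
      by (intro upcrossing_weighted_squares_gt) (auto simp: less_imp_le)
    also have "\<dots> < \<delta>\<^sup>2 * (\<delta> / (2 * K))"
      using N1[of "Suc p" k] p i by simp
    finally show False .
  qed
qed

lemma biased_gradient_ascent_converges:
  fixes f :: "'v::real_inner \<Rightarrow> real" and x d :: "nat \<Rightarrow> 'v"
  assumes grad: "\<forall>z. GDERIV f z :> g z" and lip: "L-lipschitz_on UNIV g"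
    and f_bounded: "\<forall>z. f z \<le> F" and g_bounded: "\<forall>z. norm (g z) \<le> G"
    and step: "\<forall>i. x (Suc i) = x i + \<alpha> i *\<^sub>R d i" and d_bounded: "\<forall>i. norm (d i) \<le> D"
    and bias: "\<forall>i. norm (g (x i) - d i) \<le> B * \<alpha> i"
    and \<alpha>_pos: "\<forall>i. 0 < \<alpha> i" and \<alpha>_sum: "\<not> summable \<alpha>" and \<alpha>_sq_sum: "summable (\<lambda>i. (\<alpha> i)\<^sup>2)"
  shows "convergent (\<lambda>i. f (x i)) \<and> (\<lambda>i. g (x i)) \<longlonglongrightarrow> 0"
proof -
  have L_nonneg: "0 \<le> L"
    using lip by (simp add: lipschitz_on_def)
  have G_nonneg: "0 \<le> G" and D_nonneg: "0 \<le> D"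
    using g_bounded d_bounded norm_ge_zero order_trans by metis+
  have B_nonneg: "0 \<le> B"
    using bias norm_ge_zero[of "g (x 0) - d 0"] \<alpha>_pos by (metis order_trans zero_le_mult_iff not_le)
  define C where "C = G * B + L / 2 * D\<^sup>2"
  have "\<alpha> i * (norm (g (x i)))\<^sup>2 - C * (\<alpha> i)\<^sup>2 \<le> f (x (Suc i)) - f (x i)" for i
    using ascent_step_lower_bound[OF grad lip, of "x i" G "d i" D B "\<alpha> i"]
      g_bounded d_bounded bias \<alpha>_pos step by (force simp: C_def less_imp_le)
  moreover have "0 \<le> C"
    using G_nonneg B_nonneg L_nonneg by (simp add: C_def)
  ultimately have f_conv: "convergent (\<lambda>i. f (x i))"
    and weighted: "summable (\<lambda>i. \<alpha> i * (norm (g (x i)))\<^sup>2)"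
    using convergent_if_increments_bounded_below[of "\<lambda>i. f (x i)" F C "\<lambda>i. \<alpha> i * (norm (g (x i)))\<^sup>2" \<alpha>]
      f_bounded \<alpha>_pos \<alpha>_sq_sum by (auto simp: less_imp_le)
  have "(\<lambda>i. sqrt ((\<alpha> i)\<^sup>2)) \<longlonglongrightarrow> sqrt 0"
    using summable_LIMSEQ_zero[OF \<alpha>_sq_sum] by (rule tendsto_real_sqrt)
  then have \<alpha>_lim: "\<alpha> \<longlonglongrightarrow> 0"
    using \<alpha>_pos by (simp add: less_imp_le)
  have "norm (g (x (Suc i))) - norm (g (x i)) \<le> (L * D + 1) * \<alpha> i" for i
  proof -
    have "norm (g (x (Suc i))) - norm (g (x i)) \<le> L * norm (x (Suc i) - x i)"
      using norm_triangle_ineq2[of "g (x (Suc i))" "g (x i)"] lipschitz_onD[OF lip, of "x (Suc i)" "x i"]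
      by (simp add: dist_norm)
    also have "\<dots> \<le> L * (\<alpha> i * D)"
      using step d_bounded \<alpha>_pos L_nonneg by (intro mult_left_mono) (auto simp: less_imp_le)
    also have "\<dots> \<le> (L * D + 1) * \<alpha> i"
      using \<alpha>_pos by (simp add: algebra_simps less_imp_le)
    finally show ?thesis .
  qed
  then have "(\<lambda>i. norm (g (x i))) \<longlonglongrightarrow> 0"
    using mult_nonneg_nonneg[OF L_nonneg D_nonneg]
    by (intro tendsto_zero_if_weighted_squares_summable[OF \<alpha>_pos \<alpha>_sum \<alpha>_lim weighted]) auto
  then show ?thesis
    using f_conv tendsto_norm_zero_iff by blast
qed

lemma stationary_limit_point:
  fixes g :: "'a::topological_space \<Rightarrow> 'b::real_normed_vector"
  assumes "continuous_on UNIV g" "(\<lambda>i. g (x i)) \<longlonglongrightarrow> 0" "strict_mono r" "(x \<circ> r) \<longlonglongrightarrow> y"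
  shows "g y = 0"
proof -
  have "(\<lambda>i. g ((x \<circ> r) i)) \<longlonglongrightarrow> g y"
    using assms(1,4) by (rule continuous_on_tendsto_compose) auto
  moreover have "(\<lambda>i. g ((x \<circ> r) i)) \<longlonglongrightarrow> 0"
    using LIMSEQ_subseq_LIMSEQ[OF assms(2,3)] by (simp add: comp_def)
  ultimately show ?thesis
    by (rule LIMSEQ_unique)
qed

section \<open>Finite-horizon Markov decision processes\<close>

definition prob_vector :: "('i::finite \<Rightarrow> real) \<Rightarrow> bool" where
  "prob_vector p \<longleftrightarrow> (\<forall>i. 0 \<le> p i) \<and> (\<Sum>i\<in>UNIV. p i) = 1"

lemma prob_vector_nonneg: "prob_vector p \<Longrightarrow> 0 \<le> p i"
  by (simp add: prob_vector_def)

lemma prob_vector_sum: "prob_vector p \<Longrightarrow> (\<Sum>i\<in>UNIV. p i) = 1"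
  by (simp add: prob_vector_def)

lemma prob_vector_eq_0_if_one:
  assumes p: "prob_vector p" and "p i = 1" "j \<noteq> i"
  shows "p j = 0"
proof -
  have "(\<Sum>k\<in>UNIV. p k) = p i + (\<Sum>k\<in>UNIV - {i}. p k)"
    by (simp add: sum.remove)
  then have "(\<Sum>k\<in>UNIV - {i}. p k) = 0"
    using assms by (simp add: prob_vector_def)
  then show ?thesis
    using p \<open>j \<noteq> i\<close> by (simp add: prob_vector_def sum_nonneg_eq_0_iff)
qed

lemma norm_prob_vector_sum_le:
  fixes x :: "'i::finite \<Rightarrow> 'v::real_normed_vector"
  assumes w: "prob_vector w" and bound: "\<And>i. 0 < w i \<Longrightarrow> norm (x i) \<le> B"
  shows "norm (\<Sum>i\<in>UNIV. w i *\<^sub>R x i) \<le> B"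
proof -
  have "norm (\<Sum>i\<in>UNIV. w i *\<^sub>R x i) \<le> (\<Sum>i\<in>UNIV. w i * norm (x i))"
    using norm_sum[of "\<lambda>i. w i *\<^sub>R x i" UNIV] prob_vector_nonneg[OF w] by simp
  also have "\<dots> \<le> (\<Sum>i\<in>UNIV. w i * B)"
  proof (rule sum_mono)
    show "w i * norm (x i) \<le> w i * B" for i
      using bound[of i] prob_vector_nonneg[OF w, of i] by (cases "w i = 0") (auto intro: mult_left_mono)
  qed
  also have "\<dots> = B"
    using prob_vector_sum[OF w] by (simp add: sum_distrib_right[symmetric])
  finally show ?thesis .
qed

lemma abs_prob_vector_sum_le:
  fixes x :: "'i::finite \<Rightarrow> real"
  assumes "prob_vector w" "\<And>i. 0 < w i \<Longrightarrow> \<bar>x i\<bar> \<le> B"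
  shows "\<bar>\<Sum>i\<in>UNIV. w i * x i\<bar> \<le> B"
  using norm_prob_vector_sum_le[of w x B] assms by simp

lemma sum_rotate3:
  "(\<Sum>x\<in>A. \<Sum>y\<in>B. \<Sum>z\<in>C. f x y z) = (\<Sum>y\<in>B. \<Sum>z\<in>C. \<Sum>x\<in>A. f x y z)"
  by (subst sum.swap) (rule sum.cong[OF refl], rule sum.swap)

lemma mean_reward_bounded:
  fixes R :: "'s::finite \<Rightarrow> 'a::finite \<Rightarrow> 's \<Rightarrow> real measure"
  obtains M where "\<forall>s a s'. \<bar>mean_reward R s a s'\<bar> \<le> M"
proof (intro that allI)
  fix s a s'
  show "\<bar>mean_reward R s a s'\<bar> \<le> Max (range (\<lambda>(s, a, s'). \<bar>mean_reward R s a s'\<bar>))"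
    by (rule Max_ge) (auto intro: image_eqI[of _ _ "(s, a, s')"])
qed

lemma prob_vector_state_dist:
  assumes "prob_vector d" "\<forall>s a. prob_vector (P s a)" "\<forall>s. prob_vector (pol s)"
  shows "prob_vector (state_dist d P pol t)"
proof (induction t)
  case 0
  then show ?case
    using assms by simp
next
  case (Suc t)
  have "(\<Sum>s'\<in>UNIV. state_dist d P pol (Suc t) s')
      = (\<Sum>s\<in>UNIV. \<Sum>a\<in>UNIV. state_dist d P pol t s * pol s a * (\<Sum>s'\<in>UNIV. P s a s'))"
    by (simp only: state_dist.simps, subst sum_rotate3, simp add: sum_distrib_left)
  also have "\<dots> = (\<Sum>s\<in>UNIV. state_dist d P pol t s * (\<Sum>a\<in>UNIV. pol s a))"
    using assms by (simp add: prob_vector_sum sum_distrib_left[symmetric])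
  also have "\<dots> = 1"
    using assms Suc by (simp add: prob_vector_sum)
  finally show ?case
    using Suc assms by (auto simp: prob_vector_def intro!: sum_nonneg)
qed

lemma state_dist_Suc_shift:
  "state_dist d P pol (Suc t) s = state_dist (state_dist d P pol (Suc 0)) P pol t s"
  by (induction t arbitrary: s) simp_all

lemma state_dist_Suc_pos:
  assumes "\<forall>s a. prob_vector (P s a)" "\<forall>s a. 0 < pol s a" "prob_vector (state_dist d P pol t)"
    and "0 < state_dist d P pol t s" "0 < P s a s'"
  shows "0 < state_dist d P pol (Suc t) s'"
proof -
  have nonneg: "0 \<le> state_dist d P pol t s * pol s a * P s a s'" for s a
    using assms by (simp add: prob_vector_def less_imp_le)
  have "0 < state_dist d P pol t s * pol s a * P s a s'"
    using assms by simp
  also have "\<dots> \<le> (\<Sum>a\<in>UNIV. state_dist d P pol t s * pol s a * P s a s')"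
    using nonneg by (intro member_le_sum) auto
  also have "\<dots> \<le> (\<Sum>s\<in>UNIV. \<Sum>a\<in>UNIV. state_dist d P pol t s * pol s a * P s a s')"
    using nonneg by (intro member_le_sum sum_nonneg) auto
  finally show ?thesis
    by simp
qed

definition V_steps :: "('s::finite \<Rightarrow> 'a::finite \<Rightarrow> 's \<Rightarrow> real) \<Rightarrow> ('s \<Rightarrow> 'a \<Rightarrow> 's \<Rightarrow> real measure)
    \<Rightarrow> ('s \<Rightarrow> 'a \<Rightarrow> real) \<Rightarrow> real \<Rightarrow> nat \<Rightarrow> 's \<Rightarrow> real" where
  "V_steps P R pol \<gamma> k s = (\<Sum>a\<in>UNIV. pol s a * Q_steps P R pol \<gamma> k s a)"

lemma Q_steps_Suc_V_steps:
  "Q_steps P R pol \<gamma> (Suc k) s a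
     = (\<Sum>s'\<in>UNIV. P s a s' * (mean_reward R s a s' + \<gamma> * V_steps P R pol \<gamma> k s'))"
  by (simp add: V_steps_def)

lemma J_obj_eq_V_steps: "J_obj d P R pol T = (\<Sum>s\<in>UNIV. d s * V_steps P R pol 1 T s)"
proof (induction T arbitrary: d)
  case 0
  then show ?case
    by (simp add: J_obj_def V_steps_def)
next
  case (Suc T)
  define d1 where "d1 = state_dist d P pol (Suc 0)"
  have "J_obj d P R pol (Suc T)
      = (\<Sum>s\<in>UNIV. \<Sum>a\<in>UNIV. \<Sum>s'\<in>UNIV. d s * pol s a * P s a s' * mean_reward R s a s')
        + J_obj d1 P R pol T"
    unfolding J_obj_def d1_def
    by (subst sum.lessThan_Suc_shift) (simp add: state_dist_Suc_shift del: state_dist.simps(2))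
  also have "J_obj d1 P R pol T = (\<Sum>s'\<in>UNIV. d1 s' * V_steps P R pol 1 T s')"
    by (rule Suc)
  also have "\<dots> = (\<Sum>s\<in>UNIV. \<Sum>a\<in>UNIV. \<Sum>s'\<in>UNIV. d s * pol s a * P s a s' * V_steps P R pol 1 T s')"
    unfolding d1_def state_dist.simps sum_distrib_right by (subst sum_rotate3) simp
  finally show ?case
    by (simp add: V_steps_def Q_steps_Suc_V_steps sum_distrib_left distrib_left sum.distrib mult.assoc)
qed

lemma abs_Q_steps_le:
  assumes P: "\<forall>s a. prob_vector (P s a)" and pol: "\<forall>s. prob_vector (pol s)"
    and M: "\<forall>s a s'. \<bar>mean_reward R s a s'\<bar> \<le> M" and \<gamma>: "0 \<le> \<gamma>" "\<gamma> \<le> 1"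
  shows "\<bar>Q_steps P R pol \<gamma> k s a\<bar> \<le> k * M"
proof (induction k arbitrary: s a)
  case 0
  then show ?case
    by simp
next
  case (Suc k)
  have "\<bar>V_steps P R pol \<gamma> k s'\<bar> \<le> k * M" for s'
    unfolding V_steps_def using pol Suc by (intro abs_prob_vector_sum_le) auto
  then have discounted: "\<bar>\<gamma> * V_steps P R pol \<gamma> k s'\<bar> \<le> 1 * (k * M)" for s'
    unfolding abs_mult using \<gamma> by (intro mult_mono) auto
  have "\<bar>mean_reward R s a s' + \<gamma> * V_steps P R pol \<gamma> k s'\<bar> \<le> M + k * M" for s'
    using abs_triangle_ineq[of "mean_reward R s a s'" "\<gamma> * V_steps P R pol \<gamma> k s'"]
      M[rule_format, of s a s'] discounted[of s'] by linarith
  then have "\<bar>Q_steps P R pol \<gamma> (Suc k) s a\<bar> \<le> M + k * M"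
    unfolding Q_steps_Suc_V_steps using P by (intro abs_prob_vector_sum_le) auto
  then show ?case
    by (simp add: algebra_simps)
qed

lemma abs_J_obj_le:
  assumes "prob_vector d" "\<forall>s a. prob_vector (P s a)" "\<forall>s. prob_vector (pol s)"
    and "\<forall>s a s'. \<bar>mean_reward R s a s'\<bar> \<le> M"
  shows "\<bar>J_obj d P R pol T\<bar> \<le> T * M"
  unfolding J_obj_eq_V_steps V_steps_def using assms abs_Q_steps_le[of P pol R M 1]
  by (intro abs_prob_vector_sum_le) auto

lemma abs_Q_steps_discount_diff_le:
  assumes P: "\<forall>s a. prob_vector (P s a)" and pol: "\<forall>s. prob_vector (pol s)"
    and M: "\<forall>s a s'. \<bar>mean_reward R s a s'\<bar> \<le> M" and \<gamma>: "0 \<le> \<gamma>" "\<gamma> \<le> 1"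
  shows "\<bar>Q_steps P R pol \<gamma> k s a - Q_steps P R pol 1 k s a\<bar> \<le> (1 - \<gamma>) * (real k)\<^sup>2 * M"
proof (induction k arbitrary: s a)
  case 0
  then show ?case
    by simp
next
  case (Suc k)
  define E where "E = (1 - \<gamma>) * (real k)\<^sup>2 * M + (1 - \<gamma>) * (k * M)"
  have M_nonneg: "0 \<le> M"
    using M by (meson abs_ge_zero order.trans)
  have term_bound: "\<bar>\<gamma> * (Q_steps P R pol \<gamma> k s' a' - Q_steps P R pol 1 k s' a')
          - (1 - \<gamma>) * Q_steps P R pol 1 k s' a'\<bar> \<le> E" for s' a'
  proof -
    have "\<bar>\<gamma> * (Q_steps P R pol \<gamma> k s' a' - Q_steps P R pol 1 k s' a')\<bar> \<le> 1 * ((1 - \<gamma>) * (real k)\<^sup>2 * M)"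
      unfolding abs_mult using \<gamma> Suc[of s' a'] by (intro mult_mono) auto
    moreover have "\<bar>(1 - \<gamma>) * Q_steps P R pol 1 k s' a'\<bar> \<le> (1 - \<gamma>) * (k * M)"
      unfolding abs_mult using \<gamma> abs_Q_steps_le[OF P pol M, of 1 k s' a'] by (intro mult_mono) auto
    ultimately show ?thesis
      unfolding E_def by linarith
  qed
  have V_diff: "\<bar>\<gamma> * V_steps P R pol \<gamma> k s' - V_steps P R pol 1 k s'\<bar> \<le> E" for s'
  proof -
    have "\<gamma> * V_steps P R pol \<gamma> k s' - V_steps P R pol 1 k s' = (\<Sum>a'\<in>UNIV. pol s' a' *
        (\<gamma> * (Q_steps P R pol \<gamma> k s' a' - Q_steps P R pol 1 k s' a') - (1 - \<gamma>) * Q_steps P R pol 1 k s' a'))"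
      unfolding V_steps_def by (simp add: sum_distrib_left sum_subtractf[symmetric] algebra_simps)
    then show ?thesis
      using pol term_bound by (auto intro!: abs_prob_vector_sum_le)
  qed
  have "Q_steps P R pol \<gamma> (Suc k) s a - Q_steps P R pol 1 (Suc k) s a
      = (\<Sum>s'\<in>UNIV. P s a s' * (\<gamma> * V_steps P R pol \<gamma> k s' - V_steps P R pol 1 k s'))"
    unfolding Q_steps_Suc_V_steps by (simp add: sum_subtractf[symmetric] algebra_simps)
  then have "\<bar>Q_steps P R pol \<gamma> (Suc k) s a - Q_steps P R pol 1 (Suc k) s a\<bar> \<le> E"
    using P V_diff by (auto intro!: abs_prob_vector_sum_le)
  also have "E \<le> (1 - \<gamma>) * (real (Suc k))\<^sup>2 * M"
  proof -
    have "(1 - \<gamma>) * M * ((real k)\<^sup>2 + k) \<le> (1 - \<gamma>) * M * (real (Suc k))\<^sup>2"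
      using \<gamma> M_nonneg by (intro mult_left_mono) (simp_all add: power2_eq_square algebra_simps mult_left_le)
    then show ?thesis
      unfolding E_def by (simp add: algebra_simps)
  qed
  finally show ?case .
qed

lemma Q_steps_absorbing_eq_0:
  assumes P: "\<forall>s a. prob_vector (P s a)"
    and absorbing: "\<forall>a. P st a st = 1" and reward: "\<forall>a. mean_reward R st a st = 0"
  shows "Q_steps P R pol \<gamma> k st a = 0"
proof (induction k arbitrary: a)
  case 0
  then show ?case
    by simp
next
  case (Suc k)
  have summand_0: "P st a s' * (mean_reward R st a s' + \<gamma> * V_steps P R pol \<gamma> k s') = 0" for s'
  proof (cases "s' = st")
    case True
    then show ?thesis
      using Suc reward by (simp add: V_steps_def)
  next
    case False
    then show ?thesis
      using prob_vector_eq_0_if_one[of "P st a" st s'] P absorbing by simp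
  qed
  then show ?case
    unfolding Q_steps_Suc_V_steps using summand_0 by (intro sum.neutral) blast
qed

lemma Q_steps_reachable_eq:
  assumes d: "prob_vector d" and P: "\<forall>s a. prob_vector (P s a)"
    and pol: "\<forall>s. prob_vector (pol s)" and pol_pos: "\<forall>s a. 0 < pol s a"
    and absorbing: "\<forall>a. P st a st = 1" and reward: "\<forall>a. mean_reward R st a st = 0"
    and terminal: "state_dist d P pol T st = 1"
    and "t + m = T" "0 < state_dist d P pol t s" "m \<le> k"
  shows "Q_steps P R pol \<gamma> k s a = Q_steps P R pol \<gamma> m s a"
  using assms(8-)
proof (induction m arbitrary: t s k a)
  case 0
  have "state_dist d P pol T s \<noteq> 0"
    using 0 by simp
  then have "s = st"
    using prob_vector_eq_0_if_one[OF prob_vector_state_dist[OF d P pol] terminal] by blast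
  then show ?case
    using Q_steps_absorbing_eq_0[OF P absorbing reward] by simp
next
  case (Suc m)
  obtain k' where k': "k = Suc k'" "m \<le> k'"
    using Suc.prems(3) by (cases k) auto
  have same_summand: "P s a s' * (mean_reward R s a s' + \<gamma> * V_steps P R pol \<gamma> k' s')
      = P s a s' * (mean_reward R s a s' + \<gamma> * V_steps P R pol \<gamma> m s')" for s'
  proof (cases "P s a s' = 0")
    case False
    then have "0 < state_dist d P pol (Suc t) s'"
      using P pol_pos prob_vector_state_dist[OF d P pol] Suc.prems(2)
      by (intro state_dist_Suc_pos) (auto simp: prob_vector_def order.strict_iff_order)
    then show ?thesis
      using Suc.IH[of "Suc t" s' k'] Suc.prems(1) k' by (simp add: V_steps_def)
  qed simp
  show ?case
    unfolding k' Q_steps_Suc_V_steps by (rule sum.cong[OF refl same_summand])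
qed

lemma GDERIV_sum:
  assumes "finite I" "\<And>i. i \<in> I \<Longrightarrow> GDERIV (f i) x :> D i"
  shows "GDERIV (\<lambda>y. \<Sum>i\<in>I. f i y) x :> (\<Sum>i\<in>I. D i)"
  using assms unfolding gderiv_def inner_sum_right by (intro has_derivative_sum) auto

lemma GDERIV_cmult: "GDERIV f x :> D \<Longrightarrow> GDERIV (\<lambda>x. c * f x) x :> c *\<^sub>R D"
  using GDERIV_mult[OF GDERIV_const, of f x D c] by simp

lemma GDERIV_unique:
  assumes "GDERIV f x :> D1" "GDERIV f x :> D2"
  shows "D1 = D2"
proof -
  have "(\<lambda>h. h \<bullet> D1) = (\<lambda>h. h \<bullet> D2)"
    using assms unfolding gderiv_def by (rule has_derivative_unique)
  then have "(D1 - D2) \<bullet> (D1 - D2) = 0"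
    by (metis inner_diff_right right_minus_eq)
  then show ?thesis
    by simp
qed

lemma GDERIV_of_GDERIV_ln:
  assumes pos: "\<forall>x. 0 < f x" and "GDERIV (\<lambda>x. ln (f x)) x :> D"
  shows "GDERIV f x :> f x *\<^sub>R D"
proof -
  have "GDERIV (\<lambda>x. exp (ln (f x))) x :> exp (ln (f x)) *\<^sub>R D"
    using assms(2) DERIV_exp by (rule GDERIV_DERIV_compose)
  then show ?thesis
    using pos by simp
qed

text \<open>The product rule applied to \<open>V_steps P R pol 1 k s\<close>, with the gradient of
  \<open>pol s a\<close> written as \<open>pol s a *\<^sub>R gl s a\<close> (gl is the gradient of the log-policy).\<close>
fun grad_V_steps :: "('s::finite \<Rightarrow> 'a::finite \<Rightarrow> 's \<Rightarrow> real) \<Rightarrow> ('s \<Rightarrow> 'a \<Rightarrow> 's \<Rightarrow> real measure)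
    \<Rightarrow> ('s \<Rightarrow> 'a \<Rightarrow> real) \<Rightarrow> ('s \<Rightarrow> 'a \<Rightarrow> 'v::real_vector) \<Rightarrow> nat \<Rightarrow> 's \<Rightarrow> 'v" where
  "grad_V_steps P R pol gl 0 s = 0"
| "grad_V_steps P R pol gl (Suc k) s =
     (\<Sum>a\<in>UNIV. (pol s a * Q_steps P R pol 1 (Suc k) s a) *\<^sub>R gl s a
        + pol s a *\<^sub>R (\<Sum>s'\<in>UNIV. P s a s' *\<^sub>R grad_V_steps P R pol gl k s'))"

lemma GDERIV_V_steps:
  assumes "\<forall>s a. GDERIV (\<lambda>x. pol x s a) \<theta> :> pol \<theta> s a *\<^sub>R gl s a"
  shows "GDERIV (\<lambda>x. V_steps P R (pol x) 1 k s) \<theta> :> grad_V_steps P R (pol \<theta>) gl k s"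
proof (induction k arbitrary: s)
  case 0
  then show ?case
    by (simp add: V_steps_def GDERIV_const)
next
  case (Suc k)
  have "GDERIV (\<lambda>x. P s a s' * (mean_reward R s a s' + 1 * V_steps P R (pol x) 1 k s')) \<theta> :>
          P s a s' *\<^sub>R (0 + 1 *\<^sub>R grad_V_steps P R (pol \<theta>) gl k s')" for a s'
    by (intro GDERIV_cmult GDERIV_add GDERIV_const Suc)
  then have "GDERIV (\<lambda>x. Q_steps P R (pol x) 1 (Suc k) s a) \<theta> :>
               (\<Sum>s'\<in>UNIV. P s a s' *\<^sub>R grad_V_steps P R (pol \<theta>) gl k s')" for a
    unfolding Q_steps_Suc_V_steps by (intro GDERIV_sum) auto
  then have "GDERIV (\<lambda>x. \<Sum>a\<in>UNIV. pol x s a * Q_steps P R (pol x) 1 (Suc k) s a) \<theta> :>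
     (\<Sum>a\<in>UNIV. pol \<theta> s a *\<^sub>R (\<Sum>s'\<in>UNIV. P s a s' *\<^sub>R grad_V_steps P R (pol \<theta>) gl k s')
        + Q_steps P R (pol \<theta>) 1 (Suc k) s a *\<^sub>R (pol \<theta> s a *\<^sub>R gl s a))"
    using assms by (intro GDERIV_sum GDERIV_mult) auto
  then show ?case
    unfolding V_steps_def[of P R _ 1 "Suc k" s] grad_V_steps.simps(2)[of P R "pol \<theta>" gl k s]
    by (simp add: algebra_simps del: Q_steps.simps)
qed

lemma sum_grad_V_steps_unroll:
  "(\<Sum>s\<in>UNIV. d s *\<^sub>R grad_V_steps P R pol gl k s)
   = (\<Sum>t<k. \<Sum>s\<in>UNIV. \<Sum>a\<in>UNIV.
        (state_dist d P pol t s * pol s a * Q_steps P R pol 1 (k - t) s a) *\<^sub>R gl s a)"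
proof (induction k arbitrary: d)
  case 0
  then show ?case
    by simp
next
  case (Suc k)
  define d1 where "d1 = state_dist d P pol (Suc 0)"
  have "(\<Sum>s\<in>UNIV. d s *\<^sub>R grad_V_steps P R pol gl (Suc k) s)
     = (\<Sum>s\<in>UNIV. \<Sum>a\<in>UNIV. (d s * pol s a * Q_steps P R pol 1 (Suc k) s a) *\<^sub>R gl s a)
       + (\<Sum>s\<in>UNIV. \<Sum>a\<in>UNIV. \<Sum>s'\<in>UNIV. (d s * pol s a * P s a s') *\<^sub>R grad_V_steps P R pol gl k s')"
    by (simp only: grad_V_steps.simps scaleR_sum_right scaleR_add_right sum.distrib scaleR_scaleR mult.assoc)
  also have "(\<Sum>s\<in>UNIV. \<Sum>a\<in>UNIV. \<Sum>s'\<in>UNIV. (d s * pol s a * P s a s') *\<^sub>R grad_V_steps P R pol gl k s')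
      = (\<Sum>s'\<in>UNIV. d1 s' *\<^sub>R grad_V_steps P R pol gl k s')"
    unfolding d1_def state_dist.simps scaleR_sum_left by (subst sum_rotate3) simp
  also have "\<dots> = (\<Sum>t<k. \<Sum>s\<in>UNIV. \<Sum>a\<in>UNIV.
        (state_dist d1 P pol t s * pol s a * Q_steps P R pol 1 (k - t) s a) *\<^sub>R gl s a)"
    by (rule Suc)
  finally show ?case
    by (subst sum.lessThan_Suc_shift) (simp add: state_dist_Suc_shift d1_def del: state_dist.simps(2) Q_steps.simps)
qed

text \<open>A state reachable at time t has only \<open>T - t\<close> rewarding steps left, so the
  undiscounted approximation is the exact gradient.\<close>
theorem policy_gradient_theorem:
  assumes d: "prob_vector d" and P: "\<forall>s a. prob_vector (P s a)"
    and pol: "\<forall>x s. prob_vector (pol x s)" and pol_pos: "\<forall>x s a. 0 < pol x s a"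
    and ln_grad: "\<forall>s a. GDERIV (\<lambda>x. ln (pol x s a)) \<theta> :> gl s a"
    and absorbing: "\<forall>a. P st a st = 1" and reward: "\<forall>a. mean_reward R st a st = 0"
    and terminal: "state_dist d P (pol \<theta>) T st = 1"
  shows "GDERIV (\<lambda>x. J_obj d P R (pol x) T) \<theta> :> disc_grad d P R (pol \<theta>) gl T 1"
proof -
  have "\<forall>s a. GDERIV (\<lambda>x. pol x s a) \<theta> :> pol \<theta> s a *\<^sub>R gl s a"
    using pol_pos ln_grad by (auto intro!: GDERIV_of_GDERIV_ln)
  then have gradient: "GDERIV (\<lambda>x. J_obj d P R (pol x) T) \<theta> :>
               (\<Sum>s\<in>UNIV. d s *\<^sub>R grad_V_steps P R (pol \<theta>) gl T s)"
    unfolding J_obj_eq_V_steps by (intro GDERIV_sum GDERIV_cmult GDERIV_V_steps) auto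
  have pol_\<theta>: "\<forall>s. prob_vector (pol \<theta> s)"
    using pol by blast
  have reachable_eq: "Q_steps P R (pol \<theta>) 1 (T - t) s a = Q_steps P R (pol \<theta>) 1 T s a"
    if "t < T" "0 < state_dist d P (pol \<theta>) t s" for t s a
    using Q_steps_reachable_eq[OF d P pol_\<theta> _ absorbing reward terminal, of t "T - t" s T 1 a] pol_pos that
    by simp
  have "0 \<le> state_dist d P (pol \<theta>) t s" for t s
    using prob_vector_nonneg[OF prob_vector_state_dist[OF d P pol_\<theta>]] .
  then have "(\<Sum>s\<in>UNIV. d s *\<^sub>R grad_V_steps P R (pol \<theta>) gl T s) = disc_grad d P R (pol \<theta>) gl T 1"
    unfolding sum_grad_V_steps_unroll disc_grad_def Q_gamma_def
    by (intro sum.cong refl) (metis reachable_eq lessThan_iff mult_zero_left order_less_le)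
  with gradient show ?thesis
    by simp
qed

lemma norm_state_action_sum_le:
  fixes F :: "nat \<Rightarrow> 's::finite \<Rightarrow> 'a::finite \<Rightarrow> 'v::real_normed_vector"
  assumes d: "prob_vector d" and P: "\<forall>s a. prob_vector (P s a)" and pol: "\<forall>s. prob_vector (pol s)"
    and bound: "\<And>t s a. norm (F t s a) \<le> K"
  shows "norm (\<Sum>t<T. \<Sum>s\<in>UNIV. \<Sum>a\<in>UNIV. (state_dist d P pol t s * pol s a) *\<^sub>R F t s a) \<le> T * K"
proof -
  have "norm (\<Sum>s\<in>UNIV. \<Sum>a\<in>UNIV. (state_dist d P pol t s * pol s a) *\<^sub>R F t s a) \<le> K" for t
  proof -
    have inner: "norm (\<Sum>a\<in>UNIV. pol s a *\<^sub>R F t s a) \<le> K" for s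
      using pol bound by (intro norm_prob_vector_sum_le) auto
    have "norm (\<Sum>s\<in>UNIV. state_dist d P pol t s *\<^sub>R (\<Sum>a\<in>UNIV. pol s a *\<^sub>R F t s a)) \<le> K"
      by (rule norm_prob_vector_sum_le[OF prob_vector_state_dist[OF d P pol]]) (rule inner)
    then show ?thesis
      by (simp add: scaleR_sum_right)
  qed
  then have "norm (\<Sum>t<T. \<Sum>s\<in>UNIV. \<Sum>a\<in>UNIV. (state_dist d P pol t s * pol s a) *\<^sub>R F t s a)
      \<le> (\<Sum>t<T. K)"
    by (rule sum_norm_le)
  then show ?thesis
    by simp
qed

lemma norm_disc_grad_le:
  fixes gl :: "'s::finite \<Rightarrow> 'a::finite \<Rightarrow> 'v::real_normed_vector"
  assumes d: "prob_vector d" and P: "\<forall>s a. prob_vector (P s a)" and pol: "\<forall>s. prob_vector (pol s)"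
    and M: "\<forall>s a s'. \<bar>mean_reward R s a s'\<bar> \<le> M" and \<gamma>: "0 \<le> \<gamma>" "\<gamma> \<le> 1"
    and gl: "\<forall>s a. norm (gl s a) \<le> Lp"
  shows "norm (disc_grad d P R pol gl T \<gamma>) \<le> T * (T * M * Lp)"
proof -
  have "0 \<le> M"
    using M by (meson abs_ge_zero order.trans)
  have "norm (Q_gamma P R pol T \<gamma> s a *\<^sub>R gl s a) \<le> T * M * Lp" for s a
    unfolding norm_scaleR Q_gamma_def
    using abs_Q_steps_le[OF P pol M \<gamma>] gl \<open>0 \<le> M\<close> by (intro mult_mono) auto
  then show ?thesis
    using norm_state_action_sum_le[OF d P pol, of "\<lambda>t s a. Q_gamma P R pol T \<gamma> s a *\<^sub>R gl s a"]
    unfolding disc_grad_def by (simp add: mult.assoc)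
qed

lemma norm_disc_grad_diff_le:
  fixes gl :: "'s::finite \<Rightarrow> 'a::finite \<Rightarrow> 'v::real_normed_vector"
  assumes d: "prob_vector d" and P: "\<forall>s a. prob_vector (P s a)" and pol: "\<forall>s. prob_vector (pol s)"
    and M: "\<forall>s a s'. \<bar>mean_reward R s a s'\<bar> \<le> M" and \<gamma>: "0 \<le> \<gamma>" "\<gamma> \<le> 1"
    and gl: "\<forall>s a. norm (gl s a) \<le> Lp"
  shows "norm (disc_grad d P R pol gl T 1 - disc_grad d P R pol gl T \<gamma>) \<le> T * ((1 - \<gamma>) * (real T)\<^sup>2 * M * Lp)"
proof -
  have "0 \<le> M"
    using M by (meson abs_ge_zero order.trans)
  define F where "F s a = (Q_gamma P R pol T 1 s a - Q_gamma P R pol T \<gamma> s a) *\<^sub>R gl s a" for s a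
  have "norm (F s a) \<le> (1 - \<gamma>) * (real T)\<^sup>2 * M * Lp" for s a
    unfolding F_def norm_scaleR Q_gamma_def
    using abs_Q_steps_discount_diff_le[OF P pol M \<gamma>, of T s a] gl \<gamma> \<open>0 \<le> M\<close>
    by (intro mult_mono) (auto simp: abs_minus_commute)
  moreover have "disc_grad d P R pol gl T 1 - disc_grad d P R pol gl T \<gamma>
      = (\<Sum>t<T. \<Sum>s\<in>UNIV. \<Sum>a\<in>UNIV. (state_dist d P pol t s * pol s a) *\<^sub>R F s a)"
    unfolding disc_grad_def F_def by (simp add: sum_subtractf[symmetric] algebra_simps)
  ultimately show ?thesis
    using norm_state_action_sum_le[OF d P pol, of "\<lambda>t. F"] by simp
qed

theorem theorem2:
  fixes d0 :: "'s::finite \<Rightarrow> real"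
    and P :: "'s \<Rightarrow> 'a::finite \<Rightarrow> 's \<Rightarrow> real"
    and R :: "'s \<Rightarrow> 'a \<Rightarrow> 's \<Rightarrow> real measure"
    and Rmax :: real
    and s_term :: 's
    and T :: nat
    and \<pi> :: "real^'n \<Rightarrow> 's \<Rightarrow> 'a \<Rightarrow> real"
    and glog :: "real^'n \<Rightarrow> 's \<Rightarrow> 'a \<Rightarrow> real^'n"
    and L\<pi> :: real
    and gradJ :: "real^'n \<Rightarrow> real^'n"
    and \<theta> :: "nat \<Rightarrow> real^'n"
    and \<alpha> \<gamma> :: "nat \<Rightarrow> real"
    and c :: real
  assumes d0_nonneg: "\<forall>s. d0 s \<ge> 0" and d0_sum: "(\<Sum>s\<in>UNIV. d0 s) = 1"
    and P_nonneg: "\<forall>s a s'. P s a s' \<ge> 0"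
    and P_sum: "\<forall>s a. (\<Sum>s'\<in>UNIV. P s a s') = 1"
    and R_prob: "\<forall>s a s'. prob_space (R s a s')"
    and R_sets: "\<forall>s a s'. sets (R s a s') = sets borel"
    and R_bounded: "\<forall>s a s'. AE x in R s a s'. \<bar>x\<bar> \<le> Rmax"
    and term_absorbing: "\<forall>a. P s_term a s_term = 1"
    and term_reward: "\<forall>a. R s_term a s_term = return borel 0"
    and term_at_T: "\<forall>\<theta>'. state_dist d0 P (\<pi> \<theta>') T s_term = 1"
    and \<pi>_pos: "\<forall>\<theta>' s a. \<pi> \<theta>' s a > 0"
    and \<pi>_sum: "\<forall>\<theta>' s. (\<Sum>a\<in>UNIV. \<pi> \<theta>' s a) = 1"
    and \<pi>_diff: "\<forall>\<theta>' s a. GDERIV (\<lambda>x. ln (\<pi> x s a)) \<theta>' :> glog \<theta>' s a"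
    and glog_bound: "\<forall>\<theta>' s a. norm (glog \<theta>' s a) \<le> L\<pi>"
    and J_grad: "\<forall>\<theta>'. GDERIV (\<lambda>x. J_obj d0 P R (\<pi> x) T) \<theta>' :> gradJ \<theta>'"
    and gradJ_lipschitz: "\<exists>L. L-lipschitz_on UNIV gradJ"
    and update: "\<forall>i. \<theta> (Suc i) = \<theta> i + \<alpha> i *\<^sub>R
                   disc_grad d0 P R (\<pi> (\<theta> i)) (glog (\<theta> i)) T (\<gamma> i)"
    and \<alpha>_pos: "\<forall>i. \<alpha> i > 0"
    and \<gamma>_range: "\<forall>i. 0 \<le> \<gamma> i \<and> \<gamma> i \<le> 1"
    and \<alpha>_sum: "\<not> summable \<alpha>"
    and \<alpha>_sq_sum: "summable (\<lambda>i. (\<alpha> i)\<^sup>2)"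
    and c_pos: "c > 0"
    and \<alpha>_ge: "\<forall>i. \<alpha> i \<ge> c * (1 - \<gamma> i)"
  shows "convergent (\<lambda>i. J_obj d0 P R (\<pi> (\<theta> i)) T)
         \<and> (\<lambda>i. gradJ (\<theta> i)) \<longlonglongrightarrow> 0
         \<and> (\<forall>\<theta>' r. strict_mono r \<and> (\<theta> \<circ> r) \<longlonglongrightarrow> \<theta>' \<longrightarrow> gradJ \<theta>' = 0)"
proof -
  txt \<open>Finiteness alone bounds the mean rewards.\<close>
  obtain M where M: "\<forall>s a s'. \<bar>mean_reward R s a s'\<bar> \<le> M"
    by (rule mean_reward_bounded)
  have d0: "prob_vector d0" and P: "\<forall>s a. prob_vector (P s a)" and pol: "\<forall>x s. prob_vector (\<pi> x s)"
    using d0_nonneg d0_sum P_nonneg P_sum \<pi>_pos \<pi>_sum by (auto simp: prob_vector_def less_imp_le)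
  then have pol_at: "\<forall>s. prob_vector (\<pi> x s)" and glog_at: "\<forall>s a. norm (glog x s a) \<le> L\<pi>" for x
    using glog_bound by blast+
  have "\<forall>a. mean_reward R s_term a s_term = 0"
    using term_reward by (simp add: mean_reward_def integral_return)
  then have gradJ_eq: "gradJ x = disc_grad d0 P R (\<pi> x) (glog x) T 1" for x
    using policy_gradient_theorem[OF d0 P pol \<pi>_pos _ term_absorbing _ term_at_T[rule_format]]
      \<pi>_diff J_grad GDERIV_unique by blast
  define K where "K = T * ((real T)\<^sup>2 * M * L\<pi>)"
  have "0 \<le> M" "0 \<le> L\<pi>"
    using M glog_bound by (meson abs_ge_zero norm_ge_zero order.trans)+
  then have "0 \<le> K"
    by (simp add: K_def)
  have bias: "\<forall>i. norm (gradJ (\<theta> i) - disc_grad d0 P R (\<pi> (\<theta> i)) (glog (\<theta> i)) T (\<gamma> i)) \<le> K / c * \<alpha> i"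
  proof
    fix i
    have "norm (gradJ (\<theta> i) - disc_grad d0 P R (\<pi> (\<theta> i)) (glog (\<theta> i)) T (\<gamma> i)) \<le> K * (1 - \<gamma> i)"
      using norm_disc_grad_diff_le[OF d0 P pol_at M _ _ glog_at, of "\<gamma> i"] \<gamma>_range
      unfolding gradJ_eq K_def by (simp add: algebra_simps)
    also have "\<dots> \<le> K / c * \<alpha> i"
      using mult_left_mono[OF \<alpha>_ge[rule_format, of i] \<open>0 \<le> K\<close>] c_pos by (simp add: field_simps)
    finally show "norm (gradJ (\<theta> i) - disc_grad d0 P R (\<pi> (\<theta> i)) (glog (\<theta> i)) T (\<gamma> i)) \<le> K / c * \<alpha> i" .
  qed
  have disc_grad_bound: "norm (disc_grad d0 P R (\<pi> x) (glog x) T \<gamma>') \<le> T * (T * M * L\<pi>)"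
    if "0 \<le> \<gamma>'" "\<gamma>' \<le> 1" for x \<gamma>'
    using norm_disc_grad_le[OF d0 P pol_at M that glog_at] .
  obtain L where lip: "L-lipschitz_on UNIV gradJ"
    using gradJ_lipschitz by blast
  have "convergent (\<lambda>i. J_obj d0 P R (\<pi> (\<theta> i)) T) \<and> (\<lambda>i. gradJ (\<theta> i)) \<longlonglongrightarrow> 0"
  proof (rule biased_gradient_ascent_converges[OF J_grad lip _ _ update _ bias \<alpha>_pos \<alpha>_sum \<alpha>_sq_sum])
    show "\<forall>x. J_obj d0 P R (\<pi> x) T \<le> T * M"
      using abs_J_obj_le[OF d0 P pol_at M] by (simp add: abs_le_iff)
    show "\<forall>x. norm (gradJ x) \<le> T * (T * M * L\<pi>)"
      using disc_grad_bound gradJ_eq by simp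
    show "\<forall>i. norm (disc_grad d0 P R (\<pi> (\<theta> i)) (glog (\<theta> i)) T (\<gamma> i)) \<le> T * (T * M * L\<pi>)"
      using disc_grad_bound \<gamma>_range by blast
  qed
  moreover have "continuous_on UNIV gradJ"
    using lip by (rule lipschitz_on_continuous_on)
  ultimately show ?thesis
    using stationary_limit_point by blast
qed

end
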